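(* For all integers $k\geq 1$ and $n\geq 3$, $\chi_i(C_{3k}\Box C_n)\leq 6$.
   Context: For a graph $G$, an incidence is a pair $(v,e)$ with $v\in V(G)$, $e\in E(G)$ and $v$ incident with $e$. Two incidences $(v,e)$ and $(w,f)$ are adjacent if $v=w$, or $e=f$, or the edge $vw$ equals $e$ or $f$. An incidence $k$-coloring of $G$ is a map from the set of incidences of $G$ to a set of $k$ colors such that adjacent incidences receive distinct colors; the incidence chromatic number $\chi_i(G)$ is the least such $k$. $C_n$ denotes the cycle on $n$ vertices and $\Box$ the Cartesian product of graphs: $G\Box H$ has vertex set $V(G)\times V(H)$, with $(u_1,v_1)$ adjacent to $(u_2,v_2)$ iff either $u_1=u_2$ and $v_1v_2\in E(H)$, or $v_1=v_2$ and $u_1u_2\in E(G)$. *)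

theory Defs
  imports Main
begin

definition cycle_V :: "nat \<Rightarrow> nat set" where
  "cycle_V n = {0..<n}"

definition cycle_E :: "nat \<Rightarrow> nat set set" where
  "cycle_E n = {{i, (i + 1) mod n} | i. i < n}"

definition cart_V :: "'a set \<Rightarrow> 'b set \<Rightarrow> ('a \<times> 'b) set" where
  "cart_V V1 V2 = V1 \<times> V2"

definition cart_E :: "'a set \<Rightarrow> 'a set set \<Rightarrow> 'b set \<Rightarrow> 'b set set \<Rightarrow> ('a \<times> 'b) set set" where
  "cart_E V1 E1 V2 E2 =
     {{(u1, v), (u2, v)} | u1 u2 v. {u1, u2} \<in> E1 \<and> v \<in> V2}
   \<union> {{(u, v1), (u, v2)} | u v1 v2. u \<in> V1 \<and> {v1, v2} \<in> E2}"

definition incidences :: "'a set \<Rightarrow> 'a set set \<Rightarrow> ('a \<times> 'a set) set" where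
  "incidences V E = {(v, e). v \<in> V \<and> e \<in> E \<and> v \<in> e}"

definition inc_adjacent :: "'a \<times> 'a set \<Rightarrow> 'a \<times> 'a set \<Rightarrow> bool" where
  "inc_adjacent i j = (case i of (v, e) \<Rightarrow> case j of (w, f) \<Rightarrow>
      v = w \<or> e = f \<or> e = {v, w} \<or> f = {v, w})"

definition incidence_coloring :: "'a set \<Rightarrow> 'a set set \<Rightarrow> nat \<Rightarrow> ('a \<times> 'a set \<Rightarrow> nat) \<Rightarrow> bool" where
  "incidence_coloring V E k c =
     ((\<forall>i \<in> incidences V E. c i < k) \<and>
      (\<forall>i \<in> incidences V E. \<forall>j \<in> incidences V E.
          i \<noteq> j \<and> inc_adjacent i j \<longrightarrow> c i \<noteq> c j))"

definition incidence_chromatic_number :: "'a set \<Rightarrow> 'a set set \<Rightarrow> nat" where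
  "incidence_chromatic_number V E = (LEAST k. \<exists>c. incidence_coloring V E k c)"

end

theory Submission
  imports Defs
begin

(* An incidence coloring is the same as a coloring of the arcs v -> w in which the arcs
   leaving a vertex get pairwise distinct colors, none of which is the color of an arc
   entering that vertex.  On C_m x C_n with 3 dividing m, the arc from (i, j) to a
   neighbor (i', j') gets a color read off a fixed table from the types (i mod 3, s) and
   (i' mod 3, s') of its endpoints, where the row types s are the cyclic word (012)^b,
   (012)^b 3 or (012)^b 3 4 for n = 3b, 3b + 1, 3b + 2.  Consecutive row types then follow
   the transitions 0 -> 1 -> 2 -> 0, 2 -> 3 -> 0 and 3 -> 4 -> 0, so the conditions at a
   vertex depend only on its column class and on the types of its own row and of the two
   adjacent rows; these finitely many cases are checked by evaluation. *)

abbreviation torus_V :: "nat \<Rightarrow> nat \<Rightarrow> (nat \<times> nat) set" where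
  "torus_V m n \<equiv> cart_V (cycle_V m) (cycle_V n)"

abbreviation torus_E :: "nat \<Rightarrow> nat \<Rightarrow> (nat \<times> nat) set set" where
  "torus_E m n \<equiv> cart_E (cycle_V m) (cycle_E m) (cycle_V n) (cycle_E n)"

lemma incidence_chromatic_number_le:
  assumes "incidence_coloring V E k c"
  shows "incidence_chromatic_number V E \<le> k"
  unfolding incidence_chromatic_number_def using assms by (auto intro: Least_le)

lemma the_other_endpoint: "(THE w'. {v, w} = {v, w'}) = w"
  by (rule the_equality) (auto simp: doubleton_eq_iff)

lemma incidence_coloring_of_arc_coloring:
  assumes doubletons: "\<And>e. e \<in> E \<Longrightarrow> \<exists>x y. e = {x, y}"
    and bound: "\<And>v w. {v, w} \<in> E \<Longrightarrow> c v w < k"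
    and out_distinct:
      "\<And>v w w'. {v, w} \<in> E \<Longrightarrow> {v, w'} \<in> E \<Longrightarrow> w \<noteq> w' \<Longrightarrow> c v w \<noteq> c v w'"
    and in_out: "\<And>u v w. {u, v} \<in> E \<Longrightarrow> {v, w} \<in> E \<Longrightarrow> c u v \<noteq> c v w"
  shows "incidence_coloring V E k (\<lambda>(v, e). c v (THE w. e = {v, w}))"
proof -
  have incidence: "\<exists>v w. i = (v, {v, w}) \<and> {v, w} \<in> E" if i: "i \<in> incidences V E" for i
  proof -
    obtain v e where "i = (v, e)" "e \<in> E" "v \<in> e"
      using i unfolding incidences_def by blast
    moreover obtain x y where "e = {x, y}" using doubletons \<open>e \<in> E\<close> by blast
    ultimately show ?thesis by (metis insertE insert_commute singletonD)
  qed
  show ?thesis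
    unfolding incidence_coloring_def
  proof (intro conjI ballI impI)
    fix i assume "i \<in> incidences V E"
    then obtain v w where "i = (v, {v, w})" "{v, w} \<in> E"
      using incidence by blast
    then show "(case i of (v, e) \<Rightarrow> c v (THE w. e = {v, w})) < k"
      using bound by (simp add: the_other_endpoint)
  next
    fix i j assume "i \<in> incidences V E" "j \<in> incidences V E" and ij: "i \<noteq> j \<and> inc_adjacent i j"
    then obtain v v' w w' where i: "i = (v, {v, v'})" "{v, v'} \<in> E"
      and j: "j = (w, {w, w'})" "{w, w'} \<in> E"
      using incidence by meson
    have adjacent: "v = w \<or> {v, v'} = {w, w'} \<or> {v, v'} = {v, w} \<or> {w, w'} = {v, w}"
      using ij unfolding i j inc_adjacent_def by simp
    have "c v v' \<noteq> c w w'"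
    proof (cases "v = w")
      case True
      then have "v' \<noteq> w'" using ij unfolding i j by auto
      then show ?thesis using out_distinct i(2) j(2) True by blast
    next
      case False
      then have "w = v' \<or> v = w'" using adjacent by (auto simp: doubleton_eq_iff)
      then show ?thesis
        using in_out i(2) j(2) by (metis insert_commute)
    qed
    then show "(case i of (v, e) \<Rightarrow> c v (THE w. e = {v, w})) \<noteq>
        (case j of (v, e) \<Rightarrow> c v (THE w. e = {v, w}))"
      unfolding i j by (simp add: the_other_endpoint)
  qed
qed

lemma pred_mod_Suc_mod:
  assumes "i < n"
  shows "(Suc i mod n + n - 1) mod n = i"
  using assms by (cases "Suc i = n") (auto simp: mod_if)

lemma Suc_mod_pred_mod:
  assumes "i < n"
  shows "Suc ((i + n - 1) mod n) mod n = i"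
  using assms by (cases i) (auto simp: mod_if)

lemma mem_cycle_E_iff:
  assumes "0 < n"
  shows "{i, j} \<in> cycle_E n \<longleftrightarrow> i < n \<and> (j = Suc i mod n \<or> j = (i + n - 1) mod n)"
proof -
  have "{i, j} \<in> cycle_E n \<longleftrightarrow> (i < n \<and> j = Suc i mod n) \<or> (j < n \<and> i = Suc j mod n)"
    unfolding cycle_E_def by (auto simp: doubleton_eq_iff)
  also have "(j < n \<and> i = Suc j mod n) \<longleftrightarrow> (i < n \<and> j = (i + n - 1) mod n)"
    using assms pred_mod_Suc_mod Suc_mod_pred_mod by auto
  finally show ?thesis by blast
qed

lemma mem_cart_E_iff:
  "{(x, y), (x', y')} \<in> cart_E V1 E1 V2 E2 \<longleftrightarrow>
     (y = y' \<and> y \<in> V2 \<and> {x, x'} \<in> E1) \<or> (x = x' \<and> x \<in> V1 \<and> {y, y'} \<in> E2)"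
proof -
  have horizontal: "{(x, y), (x', y')} = {(u1, v), (u2, v)} \<longleftrightarrow> y = v \<and> y' = v \<and> {x, x'} = {u1, u2}"
    for u1 u2 v by (auto simp: doubleton_eq_iff)
  have vertical: "{(x, y), (x', y')} = {(u, v1), (u, v2)} \<longleftrightarrow> x = u \<and> x' = u \<and> {y, y'} = {v1, v2}"
    for u v1 v2 by (auto simp: doubleton_eq_iff)
  show ?thesis
    unfolding cart_E_def mem_Collect_eq Un_iff horizontal vertical by auto
qed

lemma mod3_Suc_mod:
  fixes m :: nat
  assumes "3 dvd m"
  shows "Suc i mod m mod 3 = Suc (i mod 3) mod 3"
  using assms by (simp add: mod_mod_cancel mod_Suc_eq)

lemma mod3_pred_mod:
  fixes m :: nat
  assumes "3 dvd m" "0 < m"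
  shows "(i + m - 1) mod m mod 3 = (i mod 3 + 2) mod 3"
proof -
  obtain l where "m = 3 * l" using assms(1) by (rule dvdE)
  with assms(2) have "i + m - 1 = (i + 2) + 3 * (l - 1)" by simp
  then have "(i + m - 1) mod 3 = (i mod 3 + 2) mod 3"
    by (simp only: mod_mult_self2 mod_add_left_eq)
  then show ?thesis using assms(1) by (simp add: mod_mod_cancel)
qed

definition row_step :: "nat \<Rightarrow> nat \<Rightarrow> bool" where
  "row_step s t \<longleftrightarrow> (s, t) \<in> {(0, 1), (1, 2), (2, 0), (2, 3), (3, 0), (3, 4), (4, 0)}"

definition row_type :: "nat \<Rightarrow> nat \<Rightarrow> nat" where
  "row_type n j = (if j < 3 * (n div 3) then j mod 3 else 3 + (j - 3 * (n div 3)))"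

lemma row_step_row_type:
  assumes "3 \<le> n" "j < n"
  shows "row_step (row_type n j) (row_type n (Suc j mod n))"
proof -
  define b where "b = n div 3"
  define r where "r = n mod 3"
  have n: "n = 3 * b + r" and "1 \<le> b" "r < 3"
    using assms(1) unfolding b_def r_def by auto
  have periodic: "row_type n i = i mod 3" if "i < 3 * b" for i
    using that unfolding row_type_def b_def by simp
  have tail: "row_type n i = 3 + (i - 3 * b)" if "3 * b \<le> i" for i
    using that unfolding row_type_def b_def by simp
  have first: "row_type n 0 = 0"
    using periodic \<open>1 \<le> b\<close> by simp
  consider "Suc j < 3 * b" | "Suc j = 3 * b" | "j = 3 * b" | "j = Suc (3 * b)"
    using assms(2) \<open>r < 3\<close> unfolding n by linarith
  then show ?thesis
  proof cases
    case 1
    moreover from 1 n have "Suc j mod n = Suc j" by simp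
    ultimately have "row_type n j = j mod 3" "row_type n (Suc j mod n) = Suc j mod 3"
      using periodic by simp_all
    then show ?thesis by (auto simp: row_step_def mod_Suc)
  next
    case 2
    then have "row_type n j = 2"
      using periodic[of j] by presburger
    moreover have "row_type n (Suc j mod n) = (if r = 0 then 0 else 3)"
      using 2 n first tail[of "Suc j"] by auto
    ultimately show ?thesis by (simp add: row_step_def)
  next
    case 3
    then have "row_type n j = 3" using tail by simp
    moreover have "r = 1 \<or> r = 2" using 3 assms(2) n \<open>r < 3\<close> by linarith
    then have "row_type n (Suc j mod n) = (if r = 1 then 0 else 4)"
      using 3 n first tail[of "Suc j"] by auto
    ultimately show ?thesis by (simp add: row_step_def)
  next
    case 4
    with assms(2) n \<open>r < 3\<close> have "Suc j = n" by linarith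
    with 4 have "row_type n j = 4" "Suc j mod n = 0" using tail by auto
    then show ?thesis using first by (simp add: row_step_def)
  qed
qed

(* The diagonal of horizontal_colors and the entries of vertical_colors for row types
   that are never adjacent are not used. *)
definition horizontal_colors :: "nat list list list" where
  "horizontal_colors =
    [[[0, 5, 1], [4, 0, 1], [4, 5, 0]],
     [[0, 3, 2], [0, 0, 2], [0, 3, 0]],
     [[0, 4, 5], [1, 0, 5], [1, 4, 0]],
     [[0, 2, 0], [3, 0, 4], [5, 2, 0]],
     [[0, 0, 1], [4, 0, 3], [2, 5, 0]]]"

definition vertical_colors :: "nat list list list" where
  "vertical_colors =
    [[[0, 0, 0], [0, 3, 2], [2, 2, 0], [3, 2, 0], [2, 0, 3]],
     [[4, 5, 1], [0, 0, 0], [1, 4, 5], [0, 0, 0], [0, 0, 0]],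
     [[3, 0, 3], [0, 3, 2], [0, 0, 0], [3, 2, 0], [0, 0, 0]],
     [[4, 5, 1], [0, 0, 0], [1, 0, 3], [0, 0, 0], [4, 5, 1]],
     [[3, 2, 0], [0, 0, 0], [0, 0, 0], [5, 1, 4], [0, 0, 0]]]"

fun type_color :: "nat \<times> nat \<Rightarrow> nat \<times> nat \<Rightarrow> nat" where
  "type_color (a, s) (b, t) =
     (if s = t then horizontal_colors ! s ! a ! b else vertical_colors ! s ! t ! a)"

definition locally_proper :: "nat \<Rightarrow> nat \<Rightarrow> nat \<Rightarrow> nat \<Rightarrow> bool" where
  "locally_proper p s q a \<longleftrightarrow>
     (let nbs = [(Suc a mod 3, s), ((a + 2) mod 3, s), (a, q), (a, p)] in
      distinct (map (type_color (a, s)) nbs) \<and> (\<forall>x\<in>set nbs. type_color (a, s) x < 6) \<and>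
      (\<forall>u\<in>set nbs. \<forall>x\<in>set nbs. type_color u (a, s) \<noteq> type_color (a, s) x))"

lemma locally_proper_if_row_steps:
  assumes "row_step p s" "row_step s q" "a < 3"
  shows "locally_proper p s q a"
proof -
  have "\<forall>p\<in>set [0..<5]. \<forall>s\<in>set [0..<5]. \<forall>q\<in>set [0..<5]. \<forall>a\<in>set [0..<3].
      row_step p s \<longrightarrow> row_step s q \<longrightarrow> locally_proper p s q a"
    by code_simp
  moreover have "p < 5" "s < 5" "q < 5"
    using assms(1,2) by (auto simp: row_step_def)
  ultimately show ?thesis using assms by simp
qed

fun torus_neighbors :: "nat \<Rightarrow> nat \<Rightarrow> nat \<times> nat \<Rightarrow> (nat \<times> nat) list" where
  "torus_neighbors m n (i, j) =
     [(Suc i mod m, j), ((i + m - 1) mod m, j), (i, Suc j mod n), (i, (j + n - 1) mod n)]"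

lemma torus_edge_iff:
  assumes "0 < m" "0 < n"
  shows "{v, w} \<in> torus_E m n \<longleftrightarrow> v \<in> torus_V m n \<and> w \<in> set (torus_neighbors m n v)"
proof -
  obtain i j i' j' where "v = (i, j)" "w = (i', j')" by fastforce
  then show ?thesis
    using assms by (auto simp: mem_cart_E_iff mem_cycle_E_iff cart_V_def cycle_V_def)
qed

fun vertex_type :: "nat \<Rightarrow> nat \<times> nat \<Rightarrow> nat \<times> nat" where
  "vertex_type n (i, j) = (i mod 3, row_type n j)"

definition torus_color :: "nat \<Rightarrow> nat \<times> nat \<Rightarrow> nat \<times> nat \<Rightarrow> nat" where
  "torus_color n v w = type_color (vertex_type n v) (vertex_type n w)"

lemma torus_color_local:
  assumes "3 dvd m" "0 < m" "3 \<le> n" "v \<in> torus_V m n"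
  shows "distinct (map (torus_color n v) (torus_neighbors m n v))"
    and "\<forall>w\<in>set (torus_neighbors m n v). torus_color n v w < 6"
    and "\<forall>u\<in>set (torus_neighbors m n v). \<forall>w\<in>set (torus_neighbors m n v).
           torus_color n u v \<noteq> torus_color n v w"
proof -
  obtain i j where v: "v = (i, j)" and "j < n"
    using assms(4) by (auto simp: cart_V_def cycle_V_def)
  define p where "p = row_type n ((j + n - 1) mod n)"
  define s where "s = row_type n j"
  define q where "q = row_type n (Suc j mod n)"
  have "row_step p (row_type n (Suc ((j + n - 1) mod n) mod n))"
    unfolding p_def using \<open>j < n\<close> by (intro row_step_row_type[OF assms(3)]) simp
  then have "row_step p s"
    unfolding s_def Suc_mod_pred_mod[OF \<open>j < n\<close>] .
  moreover have "row_step s q"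
    using row_step_row_type[OF assms(3) \<open>j < n\<close>] by (simp add: s_def q_def)
  ultimately have proper: "locally_proper p s q (i mod 3)"
    by (simp add: locally_proper_if_row_steps)
  have types: "map (vertex_type n) (torus_neighbors m n v) =
      [(Suc (i mod 3) mod 3, s), ((i mod 3 + 2) mod 3, s), (i mod 3, q), (i mod 3, p)]"
    (is "_ = ?types")
    using mod3_Suc_mod[OF assms(1)] mod3_pred_mod[OF assms(1,2), of i]
    by (simp add: v p_def s_def q_def)
  have vt: "vertex_type n v = (i mod 3, s)" by (simp add: v s_def)
  have "map (torus_color n v) (torus_neighbors m n v) = map (type_color (i mod 3, s)) ?types"
    unfolding types[symmetric] by (simp add: torus_color_def[abs_def] vt comp_def)
  moreover have "vertex_type n w \<in> set ?types" if "w \<in> set (torus_neighbors m n v)" for w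
    using that unfolding types[symmetric] by simp
  moreover have "distinct (map (type_color (i mod 3, s)) ?types)"
    and "\<forall>x\<in>set ?types. type_color (i mod 3, s) x < 6"
    and "\<forall>u\<in>set ?types. \<forall>x\<in>set ?types.
           type_color u (i mod 3, s) \<noteq> type_color (i mod 3, s) x"
    using proper unfolding locally_proper_def Let_def by blast+
  ultimately show "distinct (map (torus_color n v) (torus_neighbors m n v))"
    and "\<forall>w\<in>set (torus_neighbors m n v). torus_color n v w < 6"
    and "\<forall>u\<in>set (torus_neighbors m n v). \<forall>w\<in>set (torus_neighbors m n v).
           torus_color n u v \<noteq> torus_color n v w"
    unfolding torus_color_def vt by metis+
qed

theorem torus_incidence_coloring:
  assumes "3 dvd m" "0 < m" "3 \<le> n"
  shows "incidence_coloring (torus_V m n) (torus_E m n) 6 (\<lambda>(v, e). torus_color n v (THE w. e = {v, w}))"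
proof (rule incidence_coloring_of_arc_coloring)
  have "0 < n" using assms(3) by simp
  note edge = torus_edge_iff[OF assms(2) this]
  note local = torus_color_local[OF assms]
  show "\<exists>x y. e = {x, y}" if "e \<in> torus_E m n" for e
    using that unfolding cart_E_def by blast
  show "torus_color n v w < 6" if "{v, w} \<in> torus_E m n" for v w
    using that local(2) unfolding edge by blast
  show "torus_color n v w \<noteq> torus_color n v w'"
    if "{v, w} \<in> torus_E m n" "{v, w'} \<in> torus_E m n" "w \<noteq> w'" for v w w'
  proof -
    have v: "v \<in> torus_V m n" and "w \<in> set (torus_neighbors m n v)" "w' \<in> set (torus_neighbors m n v)"
      using that(1,2) unfolding edge by simp_all
    moreover have "inj_on (torus_color n v) (set (torus_neighbors m n v))"
      using local(1)[OF v] by (simp add: distinct_map)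
    ultimately show ?thesis using that(3) by (metis inj_onD)
  qed
  show "torus_color n u v \<noteq> torus_color n v w"
    if "{u, v} \<in> torus_E m n" "{v, w} \<in> torus_E m n" for u v w
  proof -
    have "{v, u} \<in> torus_E m n" using that(1) by (simp add: insert_commute)
    then have "v \<in> torus_V m n" "u \<in> set (torus_neighbors m n v)" "w \<in> set (torus_neighbors m n v)"
      using that(2) unfolding edge by simp_all
    then show ?thesis using local(3) by blast
  qed
qed

theorem lemma1:
  fixes k n :: nat
  assumes "k \<ge> 1" and "n \<ge> 3"
  shows "incidence_chromatic_number
           (cart_V (cycle_V (3 * k)) (cycle_V n))
           (cart_E (cycle_V (3 * k)) (cycle_E (3 * k)) (cycle_V n) (cycle_E n)) \<le> 6"
proof -
  have "incidence_coloring (torus_V (3 * k) n) (torus_E (3 * k) n) 6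
      (\<lambda>(v, e). torus_color n v (THE w. e = {v, w}))"
    using assms by (intro torus_incidence_coloring) auto
  then show ?thesis by (rule incidence_chromatic_number_le)
qed

end
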